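(* Let $E$ be a separable real Hilbert space and let $1\leq p<\infty$. For every isometry (distance preserving bijection) $\Phi\colon\mathcal{W}_p(E)\to\mathcal{W}_p(E)$ there exists an isometry $\psi$ of $E$ such that $\Phi(\delta_x)=\delta_{\psi(x)}$ for all $x\in E$.
   Context: For $0<p<\infty$, $\mathcal{W}_p(E)$ is the set of Borel probability measures $\mu$ on $E$ with $\int_E\|x\|^p\,d\mu(x)<\infty$, equipped with the $p$-Wasserstein distance $d_{\mathcal{W}_p}(\mu,\nu)=\big(\inf_{\pi\in\Pi(\mu,\nu)}\int_{E\times E}\|x-y\|^p\,d\pi(x,y)\big)^{\min\{1/p,1\}}$, where $\Pi(\mu,\nu)$ is the set of Borel probability measures on $E\times E$ with marginals $\mu$ and $\nu$. $\delta_x$ denotes the Dirac measure at $x$. *)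

theory Defs
  imports "HOL-Probability.Probability"
begin

definition Wp_space :: "real \<Rightarrow> ('a::real_normed_vector) measure set" where
  "Wp_space p = {\<mu>. prob_space \<mu> \<and> sets \<mu> = sets borel \<and>
      (\<integral>\<^sup>+ x. ennreal (norm x powr p) \<partial>\<mu>) < \<infinity>}"

definition couplings :: "('a::real_normed_vector) measure \<Rightarrow> 'a measure \<Rightarrow> ('a \<times> 'a) measure set" where
  "couplings \<mu> \<nu> = {\<pi>. prob_space \<pi> \<and> sets \<pi> = sets borel \<and>
      distr \<pi> borel fst = \<mu> \<and> distr \<pi> borel snd = \<nu>}"

definition wasserstein_dist :: "real \<Rightarrow> ('a::real_normed_vector) measure \<Rightarrow> 'a measure \<Rightarrow> real" where
  "wasserstein_dist p \<mu> \<nu> =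
     (enn2real (INF \<pi>\<in>couplings \<mu> \<nu>. \<integral>\<^sup>+ z. ennreal (norm (fst z - snd z) powr p) \<partial>\<pi>))
       powr (min (1 / p) 1)"

end

theory Submission
  imports Defs
begin

text \<open>Call \<open>m\<close> a centre for \<open>x\<close> if \<open>m\<close> is a metric midpoint of \<open>x\<close> and some other point.
In \<open>W\<^sub>p(E)\<close> every measure \<open>\<nu>\<close> is a centre for every Dirac mass \<open>\<delta>\<^sub>x\<close>, the other point being the
reflection of \<open>\<nu>\<close> through \<open>x\<close>. If \<open>\<mu>\<close> is not a Dirac mass, let \<open>c\<close> be the midpoint of two distinct
points of its support. Were \<open>\<delta>\<^sub>c\<close> a centre for \<open>\<mu>\<close>, with other point \<open>\<nu>\<close>, the product coupling of \<open>\<mu>\<close>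
and \<open>\<nu>\<close> would be optimal. That forces \<open>c\<close> onto the segment \<open>[y, z]\<close> for almost every pair \<open>(y, z)\<close>,
so in the Hilbert space \<open>E\<close> all points \<open>y\<close> near the two chosen points lie on one ray from \<open>c\<close>, which
is absurd as they lie on opposite sides of \<open>c\<close>. So the Dirac masses are exactly the measures \<open>m\<close>
that are a centre for \<open>x\<close> only when \<open>x\<close> is a centre for \<open>m\<close>. This property is metric, hence
preserved by \<open>\<Phi>\<close>, and on Dirac masses \<open>W\<^sub>p\<close> is the distance of \<open>E\<close>.\<close>

definition centre_for :: "('b \<Rightarrow> 'b \<Rightarrow> real) \<Rightarrow> 'b set \<Rightarrow> 'b \<Rightarrow> 'b \<Rightarrow> bool" where
  "centre_for d S m x \<longleftrightarrow> (\<exists>y\<in>S. d m y = d m x \<and> d x y = 2 * d m x)"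

definition centre_symmetric :: "('b \<Rightarrow> 'b \<Rightarrow> real) \<Rightarrow> 'b set \<Rightarrow> 'b \<Rightarrow> bool" where
  "centre_symmetric d S m \<longleftrightarrow> (\<forall>x\<in>S. centre_for d S m x \<longrightarrow> centre_for d S x m)"

lemma centre_for_isometry:
  assumes "bij_betw f S T" and "\<forall>x\<in>S. \<forall>y\<in>S. d' (f x) (f y) = d x y"
    and "m \<in> S" and "x \<in> S"
  shows "centre_for d' T (f m) (f x) \<longleftrightarrow> centre_for d S m x"
proof -
  have "T = f ` S" using assms(1) by (simp add: bij_betw_def)
  then show ?thesis using assms(2-4) unfolding centre_for_def by auto
qed

lemma centre_symmetric_isometry:
  assumes "bij_betw f S T" and "\<forall>x\<in>S. \<forall>y\<in>S. d' (f x) (f y) = d x y" and "m \<in> S"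
  shows "centre_symmetric d' T (f m) \<longleftrightarrow> centre_symmetric d S m"
proof -
  have "T = f ` S" using assms(1) by (simp add: bij_betw_def)
  then show ?thesis
    using centre_for_isometry[OF assms(1,2)] assms(3) unfolding centre_symmetric_def by auto
qed

lemma powr_add_le_two_powr:
  fixes a b p :: real
  assumes p: "1 \<le> p" and a: "0 \<le> a" and b: "0 \<le> b"
  shows "(a + b) powr p \<le> 2 powr (p - 1) * (a powr p + b powr p)"
proof (cases "a = 0 \<or> b = 0")
  case True
  have "1 \<le> 2 powr (p - 1)" using p by (simp add: ge_one_powr_ge_zero)
  then show ?thesis using True a b
    by (auto intro: mult_left_mono[of 1 _ "_ powr p", simplified] order_trans)
next
  case False
  then have "0 < a" "0 < b" using a b by auto
  then have "((1/2) * a + (1/2) * b) powr p \<le> (1/2) * a powr p + (1/2) * b powr p"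
    using convex_onD[OF powr_convex[OF p], of "1/2" a b] by simp
  then have "((a + b) / 2) powr p \<le> (a powr p + b powr p) / 2"
    by (simp add: field_simps)
  moreover have "((a + b) / 2) powr p = (a + b) powr p / 2 powr p"
    using a b by (simp add: powr_divide)
  moreover have "2 powr p = 2 * 2 powr (p - 1)"
    by (simp add: powr_diff)
  ultimately show ?thesis
    by (simp add: field_simps)
qed

lemma powr_less_two_powr_add:
  fixes a b c p :: real
  assumes "1 \<le> p" "0 \<le> a" "0 \<le> b" "0 \<le> c" "c < a + b"
  shows "c powr p < 2 powr (p - 1) * (a powr p + b powr p)"
  using powr_less_mono2[of p c "a + b"] powr_add_le_two_powr[of p a b] assms by linarith

lemma inner_nonneg_if_dist_triangle_eq:
  fixes x1 x2 y z :: "'a::real_inner"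
  assumes "y \<noteq> z"
    and "dist x1 z = dist x1 y + dist y z" and "dist x2 z = dist x2 y + dist y z"
  shows "0 \<le> inner (x1 - y) (x2 - y)"
proof -
  have on_ray: "x - y = (norm (x - y) / norm (y - z)) *\<^sub>R (y - z)"
    if "dist x z = dist x y + dist y z" for x
  proof -
    have "norm (y - z) *\<^sub>R (x - y) = norm (x - y) *\<^sub>R (y - z)"
      using that by (simp add: dist_triangle_eq)
    then have "(1 / norm (y - z)) *\<^sub>R (norm (y - z) *\<^sub>R (x - y))
        = (1 / norm (y - z)) *\<^sub>R (norm (x - y) *\<^sub>R (y - z))"
      by simp
    then show ?thesis using assms(1) by simp
  qed
  have "inner (x1 - y) (x2 - y)
      = (norm (x1 - y) / norm (y - z)) * (norm (x2 - y) / norm (y - z)) * inner (y - z) (y - z)"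
    by (subst on_ray[OF assms(2)], subst on_ray[OF assms(3)]) simp
  then show ?thesis by simp
qed

lemma inner_neg_if_near_opposite:
  fixes u v w :: "'a::real_inner"
  assumes v: "norm (v - u) < norm u / 2" and w: "norm (w + u) < norm u / 2"
  shows "inner v w < 0"
proof -
  have "norm (v + w) \<le> norm (v - u) + norm (w + u)"
    using norm_triangle_ineq[of "v - u" "w + u"] by simp
  also have "\<dots> < norm u" using v w by simp
  also have "norm u < norm (v - w)"
  proof -
    have "(v - w) - ((v - u) - (w + u)) = 2 *\<^sub>R u"
      by (simp add: algebra_simps scaleR_2)
    then have "2 * norm u \<le> norm (v - w) + norm ((v - u) - (w + u))"
      using norm_triangle_ineq4[of "v - w" "(v - u) - (w + u)"] by simp
    also have "\<dots> \<le> norm (v - w) + (norm (v - u) + norm (w + u))"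
      using norm_triangle_ineq4[of "v - u" "w + u"] by simp
    finally show ?thesis using v w by linarith
  qed
  finally have "(norm (v + w))\<^sup>2 < (norm (v - w))\<^sup>2"
    by (simp add: power_strict_mono)
  then show ?thesis
    using dot_norm[of v w] dot_norm_neg[of v w] by simp
qed

section \<open>Couplings and Wasserstein distances to Dirac masses\<close>

lemma Wp_spaceD:
  assumes "\<mu> \<in> Wp_space p"
  shows "prob_space \<mu>" and "sets \<mu> = sets borel"
    and "(\<integral>\<^sup>+ x. ennreal (norm x powr p) \<partial>\<mu>) < \<infinity>"
  using assms by (auto simp: Wp_space_def)

lemma return_in_Wp_space: "return borel (x::'a::real_normed_vector) \<in> Wp_space p"
proof -
  have "(\<integral>\<^sup>+ y. ennreal (norm y powr p) \<partial>return borel x) = ennreal (norm x powr p)"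
    by (intro nn_integral_return) auto
  then show ?thesis
    by (auto simp: Wp_space_def prob_space_return)
qed

lemma return_borel_eq_iff: "return borel (a::'a::t1_space) = return borel b \<longleftrightarrow> a = b"
proof
  assume "return borel a = return borel b"
  then have "emeasure (return borel a) {a} = emeasure (return borel b) {a}" by simp
  then show "a = b" by (auto simp: indicator_def split: if_splits)
qed simp

lemma eq_return_if_AE_eq:
  assumes "prob_space M" and sets_M: "sets M = sets borel" and AE: "AE y in M. y = c"
  shows "M = return borel c"
proof (rule measure_eqI)
  interpret prob_space M by fact
  show "sets M = sets (return borel c)" using sets_M by simp
  fix A assume "A \<in> sets M"
  then have A: "A \<in> sets borel" using sets_M by simp
  have "emeasure M A = emeasure M (if c \<in> A then space M else {})"
    using AE A sets_M by (intro emeasure_eq_AE) (auto elim!: eventually_mono)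
  then show "emeasure M A = emeasure (return borel c) A"
    using A by (simp add: emeasure_space_1)
qed

lemma nn_integral_norm_affine_powr_finite:
  fixes \<mu> :: "'a::real_normed_vector measure"
  assumes \<mu>: "\<mu> \<in> Wp_space p" and p: "1 \<le> p"
  shows "(\<integral>\<^sup>+ y. ennreal (norm (a *\<^sub>R y + b) powr p) \<partial>\<mu>) < \<infinity>"
proof -
  interpret prob_space \<mu> using Wp_spaceD[OF \<mu>] by simp
  note [measurable_cong] = Wp_spaceD(2)[OF \<mu>]
  let ?C = "2 powr (p - 1)"
  have bound: "norm (a *\<^sub>R y + b) powr p \<le> ?C * \<bar>a\<bar> powr p * norm y powr p + ?C * norm b powr p" for y
  proof -
    have "norm (a *\<^sub>R y + b) powr p \<le> (\<bar>a\<bar> * norm y + norm b) powr p"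
      using p norm_triangle_ineq[of "a *\<^sub>R y" b] by (intro powr_mono2) auto
    also have "\<dots> \<le> ?C * ((\<bar>a\<bar> * norm y) powr p + norm b powr p)"
      using p by (intro powr_add_le_two_powr) auto
    finally show ?thesis by (simp add: powr_mult distrib_left)
  qed
  have "(\<integral>\<^sup>+ y. ennreal (norm (a *\<^sub>R y + b) powr p) \<partial>\<mu>)
      \<le> (\<integral>\<^sup>+ y. ennreal (?C * \<bar>a\<bar> powr p) * ennreal (norm y powr p) + ennreal (?C * norm b powr p) \<partial>\<mu>)"
    using bound by (intro nn_integral_mono)
      (auto simp: ennreal_mult[symmetric] ennreal_plus[symmetric] simp del: ennreal_plus)
  also have "\<dots> = ennreal (?C * \<bar>a\<bar> powr p) * (\<integral>\<^sup>+ y. ennreal (norm y powr p) \<partial>\<mu>) + ennreal (?C * norm b powr p)"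
    by (subst nn_integral_add) (auto simp: nn_integral_cmult emeasure_space_1)
  also have "\<dots> < \<infinity>"
    using Wp_spaceD(3)[OF \<mu>] by (simp add: ennreal_mult_less_top)
  finally show ?thesis .
qed

lemma distr_affine_in_Wp_space:
  fixes \<nu> :: "'a::{real_normed_vector, second_countable_topology} measure"
  assumes \<nu>: "\<nu> \<in> Wp_space p" and p: "1 \<le> p"
  shows "distr \<nu> borel (\<lambda>y. a *\<^sub>R y + b) \<in> Wp_space p"
proof -
  interpret prob_space \<nu> using Wp_spaceD[OF \<nu>] by simp
  note [measurable_cong] = Wp_spaceD(2)[OF \<nu>]
  have "(\<integral>\<^sup>+ y. ennreal (norm y powr p) \<partial>distr \<nu> borel (\<lambda>y. a *\<^sub>R y + b))
      = (\<integral>\<^sup>+ y. ennreal (norm (a *\<^sub>R y + b) powr p) \<partial>\<nu>)"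
    by (intro nn_integral_distr) measurable
  also have "\<dots> < \<infinity>" by (rule nn_integral_norm_affine_powr_finite[OF \<nu> p])
  finally show ?thesis
    unfolding Wp_space_def by (auto intro: prob_space_distr)
qed

definition transport_cost :: "real \<Rightarrow> ('a::real_normed_vector \<times> 'a) measure \<Rightarrow> ennreal" where
  "transport_cost p \<pi> = (\<integral>\<^sup>+ z. ennreal (norm (fst z - snd z) powr p) \<partial>\<pi>)"

lemma couplingsD:
  assumes "\<pi> \<in> couplings \<mu> \<nu>"
  shows "prob_space \<pi>" and "sets \<pi> = sets borel"
    and "distr \<pi> borel fst = \<mu>" and "distr \<pi> borel snd = \<nu>"
  using assms by (auto simp: couplings_def)

lemma measurable_coupling_fst_snd:
  fixes \<pi> :: "('a::{real_normed_vector, second_countable_topology} \<times> 'a) measure"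
  assumes "\<pi> \<in> couplings \<mu> \<nu>"
  shows "fst \<in> measurable \<pi> borel" and "snd \<in> measurable \<pi> borel"
  unfolding measurable_cong_sets[OF couplingsD(2)[OF assms] refl] borel_prod[symmetric]
  by simp_all

lemma nn_integral_coupling_marginals:
  fixes \<pi> :: "('a::{real_normed_vector, second_countable_topology} \<times> 'a) measure"
  assumes \<pi>: "\<pi> \<in> couplings \<mu> \<nu>" and g: "g \<in> borel_measurable borel"
  shows "(\<integral>\<^sup>+ z. g (fst z) \<partial>\<pi>) = (\<integral>\<^sup>+ y. g y \<partial>\<mu>)"
    and "(\<integral>\<^sup>+ z. g (snd z) \<partial>\<pi>) = (\<integral>\<^sup>+ y. g y \<partial>\<nu>)"
proof -
  have "g \<in> borel_measurable (distr \<pi> borel T)" for T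
    using g by (simp add: measurable_cong_sets[OF sets_distr refl])
  then show "(\<integral>\<^sup>+ z. g (fst z) \<partial>\<pi>) = (\<integral>\<^sup>+ y. g y \<partial>\<mu>)"
    and "(\<integral>\<^sup>+ z. g (snd z) \<partial>\<pi>) = (\<integral>\<^sup>+ y. g y \<partial>\<nu>)"
    using nn_integral_distr[OF measurable_coupling_fst_snd(1)[OF \<pi>]]
      nn_integral_distr[OF measurable_coupling_fst_snd(2)[OF \<pi>]]
    by (simp_all add: couplingsD(3,4)[OF \<pi>, symmetric])
qed

lemma transport_cost_return_left:
  fixes x :: "'a::{real_normed_vector, second_countable_topology}"
  assumes \<pi>: "\<pi> \<in> couplings (return borel x) \<nu>"
  shows "transport_cost p \<pi> = (\<integral>\<^sup>+ z. ennreal (norm (z - x) powr p) \<partial>\<nu>)"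
proof -
  have "AE y in distr \<pi> borel fst. y = x"
    unfolding couplingsD(3)[OF \<pi>] by (subst AE_return) auto
  then have "AE z in \<pi>. fst z = x" by (rule AE_distrD[OF measurable_coupling_fst_snd(1)[OF \<pi>]])
  then have "transport_cost p \<pi> = (\<integral>\<^sup>+ z. ennreal (norm (snd z - x) powr p) \<partial>\<pi>)"
    unfolding transport_cost_def
    by (intro nn_integral_cong_AE) (auto elim!: eventually_mono simp: norm_minus_commute)
  also have "\<dots> = (\<integral>\<^sup>+ z. ennreal (norm (z - x) powr p) \<partial>\<nu>)"
    by (intro nn_integral_coupling_marginals(2)[OF \<pi>]) measurable
  finally show ?thesis .
qed

lemma transport_cost_return_right:
  fixes x :: "'a::{real_normed_vector, second_countable_topology}"
  assumes \<pi>: "\<pi> \<in> couplings \<nu> (return borel x)"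
  shows "transport_cost p \<pi> = (\<integral>\<^sup>+ z. ennreal (norm (z - x) powr p) \<partial>\<nu>)"
proof -
  have "AE y in distr \<pi> borel snd. y = x"
    unfolding couplingsD(4)[OF \<pi>] by (subst AE_return) auto
  then have "AE z in \<pi>. snd z = x" by (rule AE_distrD[OF measurable_coupling_fst_snd(2)[OF \<pi>]])
  then have "transport_cost p \<pi> = (\<integral>\<^sup>+ z. ennreal (norm (fst z - x) powr p) \<partial>\<pi>)"
    unfolding transport_cost_def by (intro nn_integral_cong_AE) (auto elim!: eventually_mono)
  also have "\<dots> = (\<integral>\<^sup>+ z. ennreal (norm (z - x) powr p) \<partial>\<nu>)"
    by (intro nn_integral_coupling_marginals(1)[OF \<pi>]) measurable
  finally show ?thesis .
qed

lemma pair_measure_in_couplings: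
  fixes \<mu> \<nu> :: "'a::{real_normed_vector, second_countable_topology} measure"
  assumes "prob_space \<mu>" "sets \<mu> = sets borel" "prob_space \<nu>" "sets \<nu> = sets borel"
  shows "\<mu> \<Otimes>\<^sub>M \<nu> \<in> couplings \<mu> \<nu>"
proof -
  interpret M: prob_space \<mu> by fact
  interpret N: prob_space \<nu> by fact
  interpret P: pair_prob_space \<mu> \<nu> by unfold_locales
  have "sets (\<mu> \<Otimes>\<^sub>M \<nu>) = sets (borel :: ('a \<times> 'a) measure)"
    using sets_pair_measure_cong[OF assms(2,4)] borel_prod by metis
  moreover have "distr (\<mu> \<Otimes>\<^sub>M \<nu>) borel fst = \<mu>"
    using distr_cong[OF refl assms(2)[symmetric], of "\<mu> \<Otimes>\<^sub>M \<nu>" fst] N.distr_pair_fst by simp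
  moreover have "distr (\<mu> \<Otimes>\<^sub>M \<nu>) \<nu> snd = \<nu>"
  proof (intro measure_eqI)
    fix A assume "A \<in> sets (distr (\<mu> \<Otimes>\<^sub>M \<nu>) \<nu> snd)"
    then have A: "A \<in> sets \<nu>" by simp
    have "emeasure (distr (\<mu> \<Otimes>\<^sub>M \<nu>) \<nu> snd) A = emeasure (\<mu> \<Otimes>\<^sub>M \<nu>) (space \<mu> \<times> A)"
      using A by (auto simp: emeasure_distr space_pair_measure dest: sets.sets_into_space
          intro!: arg_cong2[where f=emeasure])
    also have "\<dots> = emeasure \<nu> A"
      using A by (subst N.emeasure_pair_measure_Times) (auto simp: M.emeasure_space_1)
    finally show "emeasure (distr (\<mu> \<Otimes>\<^sub>M \<nu>) \<nu> snd) A = emeasure \<nu> A" .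
  qed simp
  then have "distr (\<mu> \<Otimes>\<^sub>M \<nu>) borel snd = \<nu>"
    using distr_cong[OF refl assms(4)[symmetric], of "\<mu> \<Otimes>\<^sub>M \<nu>" snd] by simp
  ultimately show ?thesis
    unfolding couplings_def using P.prob_space_axioms by blast
qed

lemma graph_coupling:
  fixes \<mu> :: "'a::{real_normed_vector, second_countable_topology} measure"
  assumes "prob_space \<mu>" and sets_\<mu>: "sets \<mu> = sets borel" and f: "f \<in> borel_measurable borel"
  shows "distr \<mu> borel (\<lambda>y. (y, f y)) \<in> couplings \<mu> (distr \<mu> borel f)"
    and "transport_cost p (distr \<mu> borel (\<lambda>y. (y, f y))) = (\<integral>\<^sup>+ y. ennreal (norm (y - f y) powr p) \<partial>\<mu>)"
proof -
  note [measurable_cong] = sets_\<mu> and [measurable] = f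
  have graph: "(\<lambda>y. (y, f y)) \<in> measurable \<mu> borel"
    unfolding borel_prod[symmetric] by measurable
  have proj: "fst \<in> borel_measurable (borel :: ('a \<times> 'a) measure)"
    "snd \<in> borel_measurable (borel :: ('a \<times> 'a) measure)"
    unfolding borel_prod[symmetric] by simp_all
  have "distr (distr \<mu> borel (\<lambda>y. (y, f y))) borel fst = \<mu>"
    using distr_distr[OF proj(1) graph] distr_id2[OF sets_\<mu>[symmetric]] by (simp add: o_def)
  moreover have "distr (distr \<mu> borel (\<lambda>y. (y, f y))) borel snd = distr \<mu> borel f"
    using distr_distr[OF proj(2) graph] by (simp add: o_def)
  ultimately show "distr \<mu> borel (\<lambda>y. (y, f y)) \<in> couplings \<mu> (distr \<mu> borel f)"
    unfolding couplings_def using prob_space.prob_space_distr[OF assms(1) graph] by simp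
  show "transport_cost p (distr \<mu> borel (\<lambda>y. (y, f y))) = (\<integral>\<^sup>+ y. ennreal (norm (y - f y) powr p) \<partial>\<mu>)"
    unfolding transport_cost_def by (subst nn_integral_distr[OF graph]) (simp_all add: borel_prod[symmetric])
qed

lemma wasserstein_dist_le_transport_cost:
  assumes p: "1 \<le> p" and \<pi>: "\<pi> \<in> couplings \<mu> \<nu>" and fin: "transport_cost p \<pi> < \<infinity>"
  shows "wasserstein_dist p \<mu> \<nu> \<le> enn2real (transport_cost p \<pi>) powr (1 / p)"
proof -
  have "enn2real (INF \<pi>\<in>couplings \<mu> \<nu>. transport_cost p \<pi>) \<le> enn2real (transport_cost p \<pi>)"
    using fin by (intro enn2real_mono INF_lower[OF \<pi>]) auto
  then show ?thesis
    using p unfolding wasserstein_dist_def transport_cost_def by (simp add: powr_mono2)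
qed

lemma wasserstein_dist_eqI:
  assumes p: "1 \<le> p" and \<pi>: "\<pi> \<in> couplings \<mu> \<nu>" and "transport_cost p \<pi> \<le> c"
    and "\<And>\<pi>'. \<pi>' \<in> couplings \<mu> \<nu> \<Longrightarrow> c \<le> transport_cost p \<pi>'"
  shows "wasserstein_dist p \<mu> \<nu> = enn2real c powr (1 / p)"
proof -
  have "(INF \<pi>\<in>couplings \<mu> \<nu>. transport_cost p \<pi>) = c"
    using assms(3,4) INF_lower[OF \<pi>, of "transport_cost p"]
    by (intro antisym INF_greatest) (auto intro: order_trans)
  then show ?thesis
    using p unfolding wasserstein_dist_def transport_cost_def by simp
qed

lemma wasserstein_dist_nonneg: "0 \<le> wasserstein_dist p \<mu> \<nu>"
  by (simp add: wasserstein_dist_def)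

lemma wasserstein_dist_return_left:
  fixes \<nu> :: "'a::{real_normed_vector, second_countable_topology} measure"
  assumes p: "1 \<le> p" and \<nu>: "\<nu> \<in> Wp_space p"
  shows "wasserstein_dist p (return borel x) \<nu>
    = enn2real (\<integral>\<^sup>+ z. ennreal (norm (z - x) powr p) \<partial>\<nu>) powr (1 / p)"
proof -
  have \<pi>: "return borel x \<Otimes>\<^sub>M \<nu> \<in> couplings (return borel x) \<nu>"
    using Wp_spaceD[OF \<nu>] by (intro pair_measure_in_couplings) (auto simp: prob_space_return)
  show ?thesis
  proof (rule wasserstein_dist_eqI[OF p \<pi>])
    show "\<integral>\<^sup>+ z. ennreal (norm (z - x) powr p) \<partial>\<nu> \<le> transport_cost p \<pi>'"
      if "\<pi>' \<in> couplings (return borel x) \<nu>" for \<pi>'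
      using transport_cost_return_left[OF that] by simp
  qed (simp add: transport_cost_return_left[OF \<pi>])
qed

lemma wasserstein_dist_return_right:
  fixes \<nu> :: "'a::{real_normed_vector, second_countable_topology} measure"
  assumes p: "1 \<le> p" and \<nu>: "\<nu> \<in> Wp_space p"
  shows "wasserstein_dist p \<nu> (return borel x)
    = enn2real (\<integral>\<^sup>+ z. ennreal (norm (z - x) powr p) \<partial>\<nu>) powr (1 / p)"
proof -
  have \<pi>: "\<nu> \<Otimes>\<^sub>M return borel x \<in> couplings \<nu> (return borel x)"
    using Wp_spaceD[OF \<nu>] by (intro pair_measure_in_couplings) (auto simp: prob_space_return)
  show ?thesis
  proof (rule wasserstein_dist_eqI[OF p \<pi>])
    show "\<integral>\<^sup>+ z. ennreal (norm (z - x) powr p) \<partial>\<nu> \<le> transport_cost p \<pi>'"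
      if "\<pi>' \<in> couplings \<nu> (return borel x)" for \<pi>'
      using transport_cost_return_right[OF that] by simp
  qed (simp add: transport_cost_return_right[OF \<pi>])
qed

lemma wasserstein_dist_return_return:
  fixes a b :: "'a::{real_normed_vector, second_countable_topology}"
  assumes p: "1 \<le> p"
  shows "wasserstein_dist p (return borel a) (return borel b) = dist a b"
proof -
  have "(\<integral>\<^sup>+ z. ennreal (norm (z - a) powr p) \<partial>return borel b) = ennreal (norm (b - a) powr p)"
    by (intro nn_integral_return) auto
  then show ?thesis
    using p wasserstein_dist_return_left[OF p return_in_Wp_space, of a b]
    by (simp add: powr_powr dist_norm norm_minus_commute)
qed

lemma wasserstein_dist_return_eq_0_iff:
  fixes \<nu> :: "'a::{real_normed_vector, second_countable_topology} measure"
  assumes p: "1 \<le> p" and \<nu>: "\<nu> \<in> Wp_space p"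
  shows "wasserstein_dist p (return borel c) \<nu> = 0 \<longleftrightarrow> \<nu> = return borel c"
proof
  note [measurable_cong] = Wp_spaceD(2)[OF \<nu>]
  assume "wasserstein_dist p (return borel c) \<nu> = 0"
  moreover have "(\<integral>\<^sup>+ z. ennreal (norm (z - c) powr p) \<partial>\<nu>) < \<infinity>"
    using nn_integral_norm_affine_powr_finite[OF \<nu> p, of 1 "- c"] by simp
  ultimately have "(\<integral>\<^sup>+ z. ennreal (norm (z - c) powr p) \<partial>\<nu>) = 0"
    using wasserstein_dist_return_left[OF p \<nu>] by (auto simp: enn2real_eq_0_iff)
  then have "AE z in \<nu>. ennreal (norm (z - c) powr p) = 0"
    by (subst (asm) nn_integral_0_iff_AE) measurable
  then have "AE z in \<nu>. z = c" by (auto elim!: eventually_mono)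
  then show "\<nu> = return borel c" using Wp_spaceD[OF \<nu>] by (intro eq_return_if_AE_eq) auto
qed (simp add: wasserstein_dist_return_return[OF p])

section \<open>Every measure is a centre for every Dirac mass\<close>

lemma transport_cost_lower_bound:
  fixes x :: "'a::{real_normed_vector, second_countable_topology}"
  assumes p: "1 \<le> p" and \<pi>: "\<pi> \<in> couplings \<mu> \<nu>"
  shows "ennreal (2 powr (1 - p)) * (\<integral>\<^sup>+ z. ennreal (norm (z - x) powr p) \<partial>\<nu>)
    \<le> (\<integral>\<^sup>+ y. ennreal (norm (y - x) powr p) \<partial>\<mu>) + transport_cost p \<pi>"
proof -
  have [measurable_cong]: "sets \<pi> = sets (borel \<Otimes>\<^sub>M borel)"
    using couplingsD(2)[OF \<pi>] by (simp only: borel_prod)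
  have pointwise: "2 powr (1 - p) * norm (snd z - x) powr p
      \<le> norm (fst z - x) powr p + norm (fst z - snd z) powr p" for z :: "'a \<times> 'a"
  proof -
    have "norm (snd z - x) powr p \<le> (norm (fst z - x) + norm (fst z - snd z)) powr p"
      using p norm_triangle_ineq[of "fst z - x" "snd z - fst z"]
      by (intro powr_mono2) (auto simp: norm_minus_commute)
    also have "\<dots> \<le> 2 powr (p - 1) * (norm (fst z - x) powr p + norm (fst z - snd z) powr p)"
      using p by (intro powr_add_le_two_powr) auto
    finally show ?thesis
      by (simp add: powr_diff field_simps)
  qed
  have \<mu>_moment: "(\<integral>\<^sup>+ z. ennreal (norm (fst z - x) powr p) \<partial>\<pi>) = (\<integral>\<^sup>+ y. ennreal (norm (y - x) powr p) \<partial>\<mu>)"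
    by (rule nn_integral_coupling_marginals(1)[OF \<pi>]) measurable
  have \<nu>_moment: "(\<integral>\<^sup>+ z. ennreal (norm (snd z - x) powr p) \<partial>\<pi>) = (\<integral>\<^sup>+ y. ennreal (norm (y - x) powr p) \<partial>\<nu>)"
    by (rule nn_integral_coupling_marginals(2)[OF \<pi>]) measurable
  have "ennreal (2 powr (1 - p)) * (\<integral>\<^sup>+ z. ennreal (norm (z - x) powr p) \<partial>\<nu>)
      = (\<integral>\<^sup>+ z. ennreal (2 powr (1 - p)) * ennreal (norm (snd z - x) powr p) \<partial>\<pi>)"
    by (subst nn_integral_cmult) (simp_all add: \<nu>_moment)
  also have "\<dots> \<le> (\<integral>\<^sup>+ z. ennreal (norm (fst z - x) powr p) + ennreal (norm (fst z - snd z) powr p) \<partial>\<pi>)"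
    using pointwise by (intro nn_integral_mono)
      (simp add: ennreal_mult[symmetric] ennreal_plus[symmetric] del: ennreal_plus)
  also have "\<dots> = (\<integral>\<^sup>+ y. ennreal (norm (y - x) powr p) \<partial>\<mu>) + transport_cost p \<pi>"
    unfolding transport_cost_def by (subst nn_integral_add) (simp_all add: \<mu>_moment)
  finally show ?thesis .
qed

lemma nn_integral_reflection:
  fixes \<nu> :: "'a::{real_normed_vector, second_countable_topology} measure"
  assumes [measurable_cong]: "sets \<nu> = sets borel"
  shows "(\<integral>\<^sup>+ z. ennreal (norm (z - x) powr p) \<partial>distr \<nu> borel (\<lambda>y. 2 *\<^sub>R y - x))
    = ennreal (2 powr p) * (\<integral>\<^sup>+ y. ennreal (norm (y - x) powr p) \<partial>\<nu>)"
proof -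
  have "(2 *\<^sub>R y - x) - x = 2 *\<^sub>R (y - x)" for y :: 'a
    by (simp add: algebra_simps scaleR_2)
  then have "(\<integral>\<^sup>+ z. ennreal (norm (z - x) powr p) \<partial>distr \<nu> borel (\<lambda>y. 2 *\<^sub>R y - x))
      = (\<integral>\<^sup>+ y. ennreal (2 powr p) * ennreal (norm (y - x) powr p) \<partial>\<nu>)"
    by (subst nn_integral_distr) (simp_all add: powr_mult ennreal_mult)
  also have "\<dots> = ennreal (2 powr p) * (\<integral>\<^sup>+ y. ennreal (norm (y - x) powr p) \<partial>\<nu>)"
    by (rule nn_integral_cmult) measurable
  finally show ?thesis .
qed

lemma wasserstein_dist_reflection:
  fixes \<nu> :: "'a::{real_normed_vector, second_countable_topology} measure"
  assumes p: "1 \<le> p" and \<nu>: "\<nu> \<in> Wp_space p"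
  shows "wasserstein_dist p \<nu> (distr \<nu> borel (\<lambda>y. 2 *\<^sub>R y - x))
    = enn2real (\<integral>\<^sup>+ y. ennreal (norm (y - x) powr p) \<partial>\<nu>) powr (1 / p)"
proof -
  note [measurable_cong] = Wp_spaceD(2)[OF \<nu>]
  define C where "C = (\<integral>\<^sup>+ y. ennreal (norm (y - x) powr p) \<partial>\<nu>)"
  have C_fin: "C < \<infinity>"
    unfolding C_def using nn_integral_norm_affine_powr_finite[OF \<nu> p, of 1 "- x"] by simp
  have "(\<lambda>y. 2 *\<^sub>R y - x) \<in> borel_measurable borel" by measurable
  note graph = graph_coupling[OF Wp_spaceD(1,2)[OF \<nu>] this]
  have "norm (y - (2 *\<^sub>R y - x)) = norm (y - x)" for y :: 'a
    by (simp add: algebra_simps scaleR_2 norm_minus_commute)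
  then have cost: "transport_cost p (distr \<nu> borel (\<lambda>y. (y, 2 *\<^sub>R y - x))) = C"
    unfolding C_def graph(2) by simp
  have "C \<le> transport_cost p \<pi>" if "\<pi> \<in> couplings \<nu> (distr \<nu> borel (\<lambda>y. 2 *\<^sub>R y - x))" for \<pi>
  proof -
    have "ennreal (2 powr (1 - p)) * ennreal (2 powr p) = 2"
      by (simp add: ennreal_mult[symmetric] powr_add[symmetric])
    then have "C + C = ennreal (2 powr (1 - p)) * (ennreal (2 powr p) * C)"
      by (metis mult.assoc mult_2)
    also have "\<dots> \<le> C + transport_cost p \<pi>"
      using transport_cost_lower_bound[OF p that, of x]
      by (simp add: C_def nn_integral_reflection Wp_spaceD(2)[OF \<nu>])
    finally have "C + C \<le> C + transport_cost p \<pi>" .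
    then show ?thesis
      using C_fin by (auto simp: ennreal_add_left_cancel_le)
  qed
  then show ?thesis
    unfolding C_def[symmetric]
    by (intro wasserstein_dist_eqI[OF p graph(1)]) (simp_all add: cost)
qed

lemma centre_for_return:
  fixes \<nu> :: "'a::{real_normed_vector, second_countable_topology} measure"
  assumes p: "1 \<le> p" and \<nu>: "\<nu> \<in> Wp_space p"
  shows "centre_for (wasserstein_dist p) (Wp_space p) \<nu> (return borel x)"
proof -
  define C where "C = enn2real (\<integral>\<^sup>+ y. ennreal (norm (y - x) powr p) \<partial>\<nu>)"
  define \<nu>' where "\<nu>' = distr \<nu> borel (\<lambda>y. 2 *\<^sub>R y - x)"
  have \<nu>': "\<nu>' \<in> Wp_space p"
    using distr_affine_in_Wp_space[OF \<nu> p, of 2 "- x"] by (simp add: \<nu>'_def)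
  have "wasserstein_dist p (return borel x) \<nu>' = (2 powr p * C) powr (1 / p)"
    using wasserstein_dist_return_left[OF p \<nu>'] Wp_spaceD(2)[OF \<nu>]
    by (simp add: \<nu>'_def C_def nn_integral_reflection enn2real_mult)
  also have "\<dots> = 2 * C powr (1 / p)"
    using p by (simp add: C_def powr_mult powr_powr)
  finally show ?thesis
    unfolding centre_for_def using \<nu>'
    by (intro bexI[of _ \<nu>'])
      (simp_all add: \<nu>'_def C_def wasserstein_dist_reflection[OF p \<nu>] wasserstein_dist_return_right[OF p \<nu>])
qed

section \<open>A measure that is not a Dirac mass\<close>

lemma AE_emeasure_ball_pos:
  fixes M :: "'a::{metric_space, second_countable_topology} measure"
  assumes sets_M: "sets M = sets borel"
  shows "AE x in M. \<forall>e>0. 0 < emeasure M (ball x e)"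
proof -
  obtain B :: "'a set set" where "countable B" and B: "topological_basis B"
    using ex_countable_basis by blast
  define Z where "Z = {U\<in>B. emeasure M U = 0}"
  have open_B: "open U" if "U \<in> B" for U
    using that B by (auto simp: topological_basis_def)
  have "(\<Union>U\<in>Z. U) \<in> null_sets M"
    using \<open>countable B\<close> open_B sets_M unfolding Z_def
    by (intro null_sets_UN') (auto simp: null_sets_def intro: countable_subset[rotated])
  then have "AE x in M. x \<notin> (\<Union>U\<in>Z. U)" by (rule AE_not_in)
  then show ?thesis
  proof (rule eventually_mono, intro allI impI)
    fix x and e :: real
    assume x: "x \<notin> (\<Union>U\<in>Z. U)" and "0 < e"
    then obtain U where U: "U \<in> B" "x \<in> U" "U \<subseteq> ball x e"
      using topological_basisE[OF B open_ball[of x e]] centre_in_ball by metis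
    then have "emeasure M U \<le> emeasure M (ball x e)"
      using sets_M by (intro emeasure_mono) auto
    moreover have "emeasure M U \<noteq> 0" using U x unfolding Z_def by auto
    ultimately show "0 < emeasure M (ball x e)"
      by (metis not_gr_zero order_less_le_trans)
  qed
qed

lemma two_points_in_support:
  fixes M :: "'a::{metric_space, second_countable_topology} measure"
  assumes "prob_space M" and sets_M: "sets M = sets borel" and not_return: "\<And>c. M \<noteq> return borel c"
  obtains a b where "a \<noteq> b" and "\<forall>e>0. 0 < emeasure M (ball a e)" and "\<forall>e>0. 0 < emeasure M (ball b e)"
proof -
  interpret prob_space M by fact
  define S where "S = {x. \<forall>e>0. 0 < emeasure M (ball x e)}"
  have AE_S: "AE x in M. x \<in> S"
    unfolding S_def using AE_emeasure_ball_pos[OF sets_M] by simp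
  obtain a where a: "a \<in> S"
  proof (cases "S = {}")
    case True
    then have "AE x in M. False" using AE_S by simp
    then show ?thesis using emeasure_space_1 by (simp add: AE_False)
  qed blast
  obtain b where b: "b \<in> S" "b \<noteq> a"
  proof (rule ccontr)
    assume "\<not> thesis"
    then have "AE x in M. x = a" using that AE_S by (auto elim!: eventually_mono)
    then show False using eq_return_if_AE_eq[OF assms(1) sets_M] not_return by blast
  qed
  show ?thesis using that a b unfolding S_def by blast
qed

lemma AE_imp_ex_in:
  assumes AE: "AE x in M. P x" and pos: "0 < emeasure M A"
  shows "\<exists>x\<in>A. P x"
proof (rule ccontr)
  assume none: "\<not> (\<exists>x\<in>A. P x)"
  from AE obtain N where N: "{x \<in> space M. \<not> P x} \<subseteq> N" "emeasure M N = 0" "N \<in> sets M"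
    by (rule AE_E)
  have A: "A \<in> sets M" using pos emeasure_notin_sets by fastforce
  then have "A \<subseteq> N" using N(1) none sets.sets_into_space by blast
  then have "emeasure M A \<le> emeasure M N" using N(3) by (rule emeasure_mono)
  then show False using N(2) pos by simp
qed

lemma AE_eq_if_nn_integral_ge:
  fixes f g :: "'b \<Rightarrow> real"
  assumes "f \<in> borel_measurable M" and "g \<in> borel_measurable M"
    and "\<And>x. 0 \<le> f x" and f_le_g: "\<And>x. f x \<le> g x"
    and ge: "(\<integral>\<^sup>+ x. ennreal (g x) \<partial>M) \<le> (\<integral>\<^sup>+ x. ennreal (f x) \<partial>M)"
    and fin: "(\<integral>\<^sup>+ x. ennreal (f x) \<partial>M) < \<infinity>"
  shows "AE x in M. f x = g x"
proof -
  have "(\<integral>\<^sup>+ x. ennreal (g x) \<partial>M) = (\<integral>\<^sup>+ x. ennreal (f x) + ennreal (g x - f x) \<partial>M)"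
    using assms(3,4) by (intro nn_integral_cong) (simp add: ennreal_plus[symmetric] del: ennreal_plus)
  also have "\<dots> = (\<integral>\<^sup>+ x. ennreal (f x) \<partial>M) + (\<integral>\<^sup>+ x. ennreal (g x - f x) \<partial>M)"
    using assms(1,2) by (intro nn_integral_add) auto
  finally have "(\<integral>\<^sup>+ x. ennreal (g x - f x) \<partial>M) = 0"
    using ge fin by (auto simp: ennreal_add_left_cancel_le simp del: add_0_right
        dest!: order.trans[of _ _ "(\<integral>\<^sup>+ x. ennreal (f x) \<partial>M) + 0"])
  then have "AE x in M. ennreal (g x - f x) = 0"
    using assms(1,2) by (subst (asm) nn_integral_0_iff_AE) auto
  then show ?thesis using f_le_g by (auto elim!: eventually_mono simp: ennreal_eq_0_iff intro: antisym)
qed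

lemma nn_integral_coupling_moments:
  fixes \<pi> :: "('a::{real_normed_vector, second_countable_topology} \<times> 'a) measure"
  assumes \<pi>: "\<pi> \<in> couplings \<mu> \<nu>" and "0 \<le> t"
  shows "(\<integral>\<^sup>+ z. ennreal (t * (norm (fst z - c) powr p + norm (snd z - c) powr p)) \<partial>\<pi>)
    = ennreal t * ((\<integral>\<^sup>+ y. ennreal (norm (y - c) powr p) \<partial>\<mu>) + (\<integral>\<^sup>+ y. ennreal (norm (y - c) powr p) \<partial>\<nu>))"
proof -
  have [measurable_cong]: "sets \<pi> = sets (borel \<Otimes>\<^sub>M borel)"
    using couplingsD(2)[OF \<pi>] by (simp only: borel_prod)
  have "(\<integral>\<^sup>+ z. ennreal (t * (norm (fst z - c) powr p + norm (snd z - c) powr p)) \<partial>\<pi>)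
      = (\<integral>\<^sup>+ z. ennreal t * (ennreal (norm (fst z - c) powr p) + ennreal (norm (snd z - c) powr p)) \<partial>\<pi>)"
    using \<open>0 \<le> t\<close> by (intro nn_integral_cong) (simp add: ennreal_mult ennreal_plus[symmetric] del: ennreal_plus)
  also have "\<dots> = ennreal t * ((\<integral>\<^sup>+ z. ennreal (norm (fst z - c) powr p) \<partial>\<pi>)
      + (\<integral>\<^sup>+ z. ennreal (norm (snd z - c) powr p) \<partial>\<pi>))"
    by (simp add: nn_integral_cmult nn_integral_add)
  also have "(\<integral>\<^sup>+ z. ennreal (norm (fst z - c) powr p) \<partial>\<pi>) = (\<integral>\<^sup>+ y. ennreal (norm (y - c) powr p) \<partial>\<mu>)"
    by (rule nn_integral_coupling_marginals(1)[OF \<pi>]) measurable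
  also have "(\<integral>\<^sup>+ z. ennreal (norm (snd z - c) powr p) \<partial>\<pi>) = (\<integral>\<^sup>+ y. ennreal (norm (y - c) powr p) \<partial>\<nu>)"
    by (rule nn_integral_coupling_marginals(2)[OF \<pi>]) measurable
  finally show ?thesis .
qed

text \<open>The pointwise bound \<open>|y - z|\<^sup>p \<le> 2\<^sup>p\<^sup>-\<^sup>1 (|y - c|\<^sup>p + |z - c|\<^sup>p)\<close> integrates to the reverse of the
hypothesis, so it is an equality almost everywhere; by strict convexity of \<open>t \<mapsto> t\<^sup>p\<close> so is the triangle
inequality through \<open>c\<close>.\<close>

lemma AE_dist_triangle_eq_if_transport_cost_ge:
  fixes \<pi> :: "('a::{real_normed_vector, second_countable_topology} \<times> 'a) measure"
  assumes p: "1 \<le> p" and \<pi>: "\<pi> \<in> couplings \<mu> \<nu>"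
    and fin: "(\<integral>\<^sup>+ y. ennreal (norm (y - c) powr p) \<partial>\<mu>) < \<infinity>" "(\<integral>\<^sup>+ y. ennreal (norm (y - c) powr p) \<partial>\<nu>) < \<infinity>"
    and ge: "ennreal (2 powr (p - 1)) * ((\<integral>\<^sup>+ y. ennreal (norm (y - c) powr p) \<partial>\<mu>)
      + (\<integral>\<^sup>+ y. ennreal (norm (y - c) powr p) \<partial>\<nu>)) \<le> transport_cost p \<pi>"
  shows "AE z in \<pi>. dist (fst z) (snd z) = dist (fst z) c + dist c (snd z)"
proof -
  have [measurable_cong]: "sets \<pi> = sets (borel \<Otimes>\<^sub>M borel)"
    using couplingsD(2)[OF \<pi>] by (simp only: borel_prod)
  define H where "H z = 2 powr (p - 1) * (norm (fst z - c) powr p + norm (snd z - c) powr p)" for z :: "'a \<times> 'a"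
  have norm_le_H: "norm (fst z - snd z) powr p \<le> H z" for z
  proof -
    have "norm (fst z - snd z) powr p \<le> (norm (fst z - c) + norm (snd z - c)) powr p"
      using p norm_triangle_ineq4[of "fst z - c" "snd z - c"] by (intro powr_mono2) auto
    also have "\<dots> \<le> H z" unfolding H_def using p by (intro powr_add_le_two_powr) auto
    finally show ?thesis .
  qed
  have int_H: "(\<integral>\<^sup>+ z. ennreal (H z) \<partial>\<pi>) = ennreal (2 powr (p - 1)) * ((\<integral>\<^sup>+ y. ennreal (norm (y - c) powr p) \<partial>\<mu>)
      + (\<integral>\<^sup>+ y. ennreal (norm (y - c) powr p) \<partial>\<nu>))"
    unfolding H_def by (rule nn_integral_coupling_moments[OF \<pi>]) simp
  have "transport_cost p \<pi> \<le> (\<integral>\<^sup>+ z. ennreal (H z) \<partial>\<pi>)"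
    unfolding transport_cost_def using norm_le_H by (intro nn_integral_mono) (simp add: ennreal_leI)
  also have "\<dots> < \<infinity>" unfolding int_H using fin by (simp add: ennreal_mult_less_top)
  finally have "AE z in \<pi>. norm (fst z - snd z) powr p = H z"
    using norm_le_H ge unfolding int_H[symmetric] transport_cost_def
    by (intro AE_eq_if_nn_integral_ge) (auto simp: H_def)
  then show ?thesis
  proof (rule eventually_mono)
    fix z :: "'a \<times> 'a"
    assume "norm (fst z - snd z) powr p = H z"
    then have "\<not> norm (fst z - snd z) < norm (fst z - c) + norm (snd z - c)"
      using powr_less_two_powr_add[OF p, of "norm (fst z - c)" "norm (snd z - c)" "norm (fst z - snd z)"]
      unfolding H_def by fastforce
    then show "dist (fst z) (snd z) = dist (fst z) c + dist c (snd z)"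
      using norm_triangle_ineq4[of "fst z - c" "snd z - c"] by (simp add: dist_norm norm_minus_commute)
  qed
qed

lemma AE_dist_triangle_eq_if_return_midpoint:
  fixes \<mu> \<nu> :: "'a::{real_normed_vector, second_countable_topology} measure"
  assumes p: "1 \<le> p" and \<mu>: "\<mu> \<in> Wp_space p" and \<nu>: "\<nu> \<in> Wp_space p"
    and eq: "wasserstein_dist p (return borel c) \<nu> = wasserstein_dist p (return borel c) \<mu>"
    and twice: "wasserstein_dist p \<mu> \<nu> = 2 * wasserstein_dist p (return borel c) \<mu>"
  shows "AE z in \<mu> \<Otimes>\<^sub>M \<nu>. dist (fst z) (snd z) = dist (fst z) c + dist c (snd z)"
proof -
  have \<pi>: "\<mu> \<Otimes>\<^sub>M \<nu> \<in> couplings \<mu> \<nu>"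
    using Wp_spaceD[OF \<mu>] Wp_spaceD[OF \<nu>] by (intro pair_measure_in_couplings) auto
  define moment where "moment \<rho> = (\<integral>\<^sup>+ y. ennreal (norm (y - c) powr p) \<partial>\<rho>)" for \<rho>
  have moment_fin: "moment \<rho> < \<infinity>" if "\<rho> \<in> Wp_space p" for \<rho>
    using nn_integral_norm_affine_powr_finite[OF that p, of 1 "- c"] by (simp add: moment_def)
  have moment: "moment \<rho> = ennreal (wasserstein_dist p (return borel c) \<rho> powr p)" if "\<rho> \<in> Wp_space p" for \<rho>
    using wasserstein_dist_return_left[OF p that, of c] p moment_fin[OF that]
    by (simp add: moment_def powr_powr)
  define a where "a = wasserstein_dist p (return borel c) \<mu> powr p"
  have "ennreal (2 powr (p - 1)) * (moment \<mu> + moment \<nu>) \<le> transport_cost p (\<mu> \<Otimes>\<^sub>M \<nu>)"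
  proof (cases "transport_cost p (\<mu> \<Otimes>\<^sub>M \<nu>) = \<infinity>")
    case False
    then have cost_fin: "transport_cost p (\<mu> \<Otimes>\<^sub>M \<nu>) < \<infinity>" by (simp add: top.not_eq_extremum)
    have "ennreal (2 powr (p - 1)) * (moment \<mu> + moment \<nu>) = ennreal (2 powr p * a)"
      using moment[OF \<mu>] moment[OF \<nu>] eq
      by (simp add: a_def ennreal_plus[symmetric] ennreal_mult[symmetric] powr_diff del: ennreal_plus)
    also have "2 powr p * a = wasserstein_dist p \<mu> \<nu> powr p"
      unfolding twice a_def by (simp add: powr_mult)
    also have "\<dots> \<le> (enn2real (transport_cost p (\<mu> \<Otimes>\<^sub>M \<nu>)) powr (1 / p)) powr p"
      using wasserstein_dist_le_transport_cost[OF p \<pi> cost_fin] p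
      by (intro powr_mono2) (auto simp: wasserstein_dist_nonneg)
    also have "\<dots> = enn2real (transport_cost p (\<mu> \<Otimes>\<^sub>M \<nu>))"
      using p by (simp add: powr_powr)
    finally show ?thesis using cost_fin by (simp add: ennreal_leI)
  qed simp
  then show ?thesis
    using moment_fin[OF \<mu>] moment_fin[OF \<nu>] unfolding moment_def
    by (intro AE_dist_triangle_eq_if_transport_cost_ge[OF p \<pi>])
qed

lemma midpoint_not_between_near_ends:
  fixes s1 s2 y1 y2 z :: "'a::real_inner"
  defines "c \<equiv> midpoint s1 s2"
  assumes y1: "dist s1 y1 < dist s1 s2 / 4" and y2: "dist s2 y2 < dist s1 s2 / 4" and "z \<noteq> c"
    and between1: "dist y1 z = dist y1 c + dist c z"
  shows "dist y2 z \<noteq> dist y2 c + dist c z"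
proof
  assume "dist y2 z = dist y2 c + dist c z"
  then have "0 \<le> inner (y1 - c) (y2 - c)"
    using between1 \<open>z \<noteq> c\<close> by (intro inner_nonneg_if_dist_triangle_eq) auto
  moreover have "inner (y1 - c) (y2 - c) < 0"
  proof (rule inner_neg_if_near_opposite)
    have radius: "norm (s1 - c) / 2 = dist s1 s2 / 4"
      using dist_midpoint(1)[of s1 s2] by (simp add: c_def dist_norm)
    show "norm (y1 - c - (s1 - c)) < norm (s1 - c) / 2"
      using y1 unfolding radius by (simp add: dist_norm norm_minus_commute)
    have "y2 - c + (s1 - c) = y2 + s1 - (c + c)" by (simp add: algebra_simps)
    also have "\<dots> = y2 - s2" unfolding c_def midpoint_plus_self by simp
    finally have "norm (y2 - c + (s1 - c)) = dist s2 y2" by (simp only: dist_norm norm_minus_commute)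
    then show "norm (y2 - c + (s1 - c)) < norm (s1 - c) / 2"
      using y2 unfolding radius by simp
  qed
  ultimately show False by simp
qed

lemma not_centre_for_some_return:
  fixes \<mu> :: "'a::{real_inner, second_countable_topology} measure"
  assumes p: "1 \<le> p" and \<mu>: "\<mu> \<in> Wp_space p" and not_return: "\<And>x. \<mu> \<noteq> return borel x"
  shows "\<exists>c. \<not> centre_for (wasserstein_dist p) (Wp_space p) (return borel c) \<mu>"
proof -
  obtain s1 s2 where "s1 \<noteq> s2" and s1: "\<forall>e>0. 0 < emeasure \<mu> (ball s1 e)"
    and s2: "\<forall>e>0. 0 < emeasure \<mu> (ball s2 e)"
    using two_points_in_support[OF Wp_spaceD(1,2)[OF \<mu>] not_return] by blast
  define c where "c = midpoint s1 s2"
  have \<epsilon>: "0 < dist s1 s2 / 4" using \<open>s1 \<noteq> s2\<close> by simp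
  show ?thesis
  proof (intro exI notI)
    assume "centre_for (wasserstein_dist p) (Wp_space p) (return borel c) \<mu>"
    then obtain \<nu> where \<nu>: "\<nu> \<in> Wp_space p"
      and eq: "wasserstein_dist p (return borel c) \<nu> = wasserstein_dist p (return borel c) \<mu>"
      and twice: "wasserstein_dist p \<mu> \<nu> = 2 * wasserstein_dist p (return borel c) \<mu>"
      unfolding centre_for_def by blast
    interpret pair_prob_space \<mu> \<nu> using Wp_spaceD(1)[OF \<mu>] Wp_spaceD(1)[OF \<nu>]
      by (simp add: pair_prob_space_def pair_sigma_finite_def prob_space_imp_sigma_finite)
    have AE_y: "AE y in \<mu>. AE z in \<nu>. dist y z = dist y c + dist c z"
      using AE_pair[OF AE_dist_triangle_eq_if_return_midpoint[OF p \<mu> \<nu> eq twice]] by simp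
    obtain y1 where y1: "dist s1 y1 < dist s1 s2 / 4" "AE z in \<nu>. dist y1 z = dist y1 c + dist c z"
      using AE_imp_ex_in[OF AE_y s1[rule_format, OF \<epsilon>]] by auto
    obtain y2 where y2: "dist s2 y2 < dist s1 s2 / 4" "AE z in \<nu>. dist y2 z = dist y2 c + dist c z"
      using AE_imp_ex_in[OF AE_y s2[rule_format, OF \<epsilon>]] by auto
    have "wasserstein_dist p (return borel c) \<mu> \<noteq> 0"
      using wasserstein_dist_return_eq_0_iff[OF p \<mu>] not_return by blast
    then have "\<nu> \<noteq> return borel c"
      unfolding wasserstein_dist_return_eq_0_iff[OF p \<nu>, symmetric] eq .
    then have "\<not> (AE z in \<nu>. z = c)"
      using eq_return_if_AE_eq[OF Wp_spaceD(1,2)[OF \<nu>]] by blast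
    moreover have "AE z in \<nu>. z = c"
      using y1(2) y2(2)
    proof eventually_elim
      case (elim z)
      then show "z = c"
        using midpoint_not_between_near_ends[OF y1(1) y2(1), of z] unfolding c_def by blast
    qed
    ultimately show False by contradiction
  qed
qed

section \<open>Isometries of \<open>W\<^sub>p\<close> preserve Dirac masses\<close>

lemma centre_symmetric_iff_return:
  fixes \<mu> :: "'a::{real_inner, second_countable_topology} measure"
  assumes p: "1 \<le> p" and \<mu>: "\<mu> \<in> Wp_space p"
  shows "centre_symmetric (wasserstein_dist p) (Wp_space p) \<mu> \<longleftrightarrow> (\<exists>x. \<mu> = return borel x)"
proof
  assume "\<exists>x. \<mu> = return borel x"
  then show "centre_symmetric (wasserstein_dist p) (Wp_space p) \<mu>"
    unfolding centre_symmetric_def using centre_for_return[OF p] by blast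
next
  assume sym: "centre_symmetric (wasserstein_dist p) (Wp_space p) \<mu>"
  show "\<exists>x. \<mu> = return borel x"
  proof (rule ccontr)
    assume "\<nexists>x. \<mu> = return borel x"
    then obtain c where "\<not> centre_for (wasserstein_dist p) (Wp_space p) (return borel c) \<mu>"
      using not_centre_for_some_return[OF p \<mu>] by blast
    then show False
      using sym centre_for_return[OF p \<mu>] return_in_Wp_space unfolding centre_symmetric_def by blast
  qed
qed

lemma Wp_isometry_return_iff:
  fixes \<Phi> :: "('a::{real_inner, second_countable_topology}) measure \<Rightarrow> 'a measure"
  assumes p: "1 \<le> p" and bij: "bij_betw \<Phi> (Wp_space p) (Wp_space p)"
    and iso: "\<forall>\<mu>\<in>Wp_space p. \<forall>\<nu>\<in>Wp_space p. wasserstein_dist p (\<Phi> \<mu>) (\<Phi> \<nu>) = wasserstein_dist p \<mu> \<nu>"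
    and \<mu>: "\<mu> \<in> Wp_space p"
  shows "(\<exists>y. \<Phi> \<mu> = return borel y) \<longleftrightarrow> (\<exists>x. \<mu> = return borel x)"
proof -
  have "\<Phi> \<mu> \<in> Wp_space p" using bij_betwE[OF bij] \<mu> by blast
  then have "(\<exists>y. \<Phi> \<mu> = return borel y) \<longleftrightarrow> centre_symmetric (wasserstein_dist p) (Wp_space p) (\<Phi> \<mu>)"
    using centre_symmetric_iff_return[OF p] by blast
  also have "\<dots> \<longleftrightarrow> centre_symmetric (wasserstein_dist p) (Wp_space p) \<mu>"
    by (rule centre_symmetric_isometry[OF bij iso \<mu>])
  also have "\<dots> \<longleftrightarrow> (\<exists>x. \<mu> = return borel x)"
    by (rule centre_symmetric_iff_return[OF p \<mu>])
  finally show ?thesis .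
qed

theorem corollary3p6:
  fixes p :: real
    and \<Phi> :: "('a::{real_inner, complete_space, second_countable_topology}) measure \<Rightarrow> 'a measure"
  assumes "1 \<le> p"
    and "bij_betw \<Phi> (Wp_space p) (Wp_space p)"
    and "\<forall>\<mu>\<in>Wp_space p. \<forall>\<nu>\<in>Wp_space p.
           wasserstein_dist p (\<Phi> \<mu>) (\<Phi> \<nu>) = wasserstein_dist p \<mu> \<nu>"
  shows "\<exists>\<psi> :: 'a \<Rightarrow> 'a. bij \<psi> \<and> (\<forall>x y. dist (\<psi> x) (\<psi> y) = dist x y) \<and>
           (\<forall>x. \<Phi> (return borel x) = return borel (\<psi> x))"
proof -
  note p = assms(1) and bij = assms(2) and iso = assms(3)
  have "\<exists>y. \<Phi> (return borel x) = return borel y" for x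
    using Wp_isometry_return_iff[OF p bij iso return_in_Wp_space[of x]] by blast
  then obtain \<psi> where \<psi>: "\<And>x. \<Phi> (return borel x) = return borel (\<psi> x)"
    by metis
  have isometric: "dist (\<psi> x) (\<psi> y) = dist x y" for x y
    using iso return_in_Wp_space[of x p] return_in_Wp_space[of y p]
    by (simp add: wasserstein_dist_return_return[OF p, symmetric] \<psi>[symmetric])
  have "y \<in> range \<psi>" for y
  proof -
    obtain \<mu> where \<mu>: "\<mu> \<in> Wp_space p" and \<Phi>_\<mu>: "\<Phi> \<mu> = return borel y"
      using bij return_in_Wp_space[of y p] unfolding bij_betw_def by (metis imageE)
    then obtain x where "\<mu> = return borel x"
      using Wp_isometry_return_iff[OF p bij iso \<mu>] by blast
    then have "\<psi> x = y" using \<psi> \<Phi>_\<mu> by (simp add: return_borel_eq_iff)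
    then show ?thesis by blast
  qed
  moreover have "inj \<psi>" using isometric by (intro injI) (metis dist_eq_0_iff)
  ultimately show ?thesis using \<psi> isometric by (auto simp: bij_def)
qed

end
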